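(* Let $S$ be a reflective numerical semigroup with $\mathrm{g}(S)\ge1$. Then \[ \mathrm{e}(S)\ \ge\ \frac{\mathrm{F}(S)+1}{\mathrm{F}(S)+1-\mathrm{g}(S)}, \] where $\mathrm{e}(S)$ denotes the embedding dimension of $S$.
   Context: A numerical semigroup is a submonoid $S$ of $(\mathbb{N}_0,+)$ with finite complement; $\mathrm{g}(S)$ is the number of its gaps (elements of $\mathbb{N}_0\setminus S$), $\mathrm{F}(S)$ is its largest gap, and $\mathrm{e}(S)$ is the cardinality of its minimal generating set. A numerical semigroup $S$ of genus $g\ge1$ is called reflective if for every $z\in\{0,1,\dots,g-1\}$ exactly one of $z$ and $z+g$ belongs to $S$. *)

theory Defs
  imports Complex_Main
begin

definition numerical_semigroup :: "nat set \<Rightarrow> bool" where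
  "numerical_semigroup S \<longleftrightarrow> 0 \<in> S \<and> (\<forall>x\<in>S. \<forall>y\<in>S. x + y \<in> S) \<and> finite (UNIV - S)"

definition gaps :: "nat set \<Rightarrow> nat set" where
  "gaps S = UNIV - S"

definition genus :: "nat set \<Rightarrow> nat" where
  "genus S = card (gaps S)"

text \<open>Frobenius number: the largest gap (meaningful when genus is at least 1).\<close>
definition frobenius :: "nat set \<Rightarrow> nat" where
  "frobenius S = Max (gaps S)"

definition minimal_generators :: "nat set \<Rightarrow> nat set" where
  "minimal_generators S = {x \<in> S. x \<noteq> 0 \<and> \<not> (\<exists>a\<in>S. \<exists>b\<in>S. a \<noteq> 0 \<and> b \<noteq> 0 \<and> x = a + b)}"

definition embedding_dimension :: "nat set \<Rightarrow> nat" where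
  "embedding_dimension S = card (minimal_generators S)"

definition reflective :: "nat set \<Rightarrow> bool" where
  "reflective S \<longleftrightarrow> genus S \<ge> 1 \<and>
     (\<forall>z < genus S. (z \<in> S) \<noteq> (z + genus S \<in> S))"

end

theory Submission
  imports Defs "HOL-Number_Theory.Cong"
begin

text \<open>For a reflective semigroup of genus \<open>g\<close>, sending \<open>z < g\<close> to whichever of \<open>z\<close>, \<open>z + g\<close>
  is a gap is a bijection onto the gaps. Hence \<open>F < 2g\<close>, and writing \<open>F = g + M\<close> one gets
  \<open>M \<in> S\<close> while no element of \<open>S\<close> lies strictly between \<open>M\<close> and \<open>g\<close>. The claimed bound is
  \<open>F + 1 \<le> e (M + 1)\<close>. If \<open>M = 0\<close>, then \<open>S = {0} \<union> (F, \<infinity>)\<close> and \<open>e = F + 1\<close>. Otherwise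
  \<open>2M \<ge> g\<close> gives \<open>F + 1 \<le> 3 (M + 1)\<close>, which settles \<open>e \<ge> 3\<close>; and for \<open>e = 2\<close> the semigroup
  is symmetric by Sylvester's theorem, which forces \<open>M + 1 = g\<close>, i.e. \<open>F + 1 = 2 (M + 1)\<close>.\<close>

lemma sylvester_representable_or_dual:
  fixes p q x :: nat
  assumes "coprime p q" and "q > 0"
  shows "(\<exists>i j. x = i * p + j * q) \<or> (\<exists>i j. x + i * p + j * q + p + q = p * q)"
proof -
  obtain u where u: "[p * u = 1] (mod q)"
    using cong_solve_coprime_nat[OF assms(1)] by auto
  define i where "i = (u * x) mod q"
  have "i < q"
    using \<open>q > 0\<close> by (simp add: i_def)
  have "[i * p = (p * u) * x] (mod q)"
    unfolding i_def by (simp add: cong_def mod_mult_right_eq mult_ac)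
  also have "[(p * u) * x = 1 * x] (mod q)"
    using u by (rule cong_mult) simp
  finally have ip: "[i * p = x] (mod q)"
    by simp
  show ?thesis
  proof (cases "i * p \<le> x")
    case True
    then obtain j where "x - i * p = q * j"
      using ip by (metis cong_altdef_nat cong_sym dvdE)
    with True have "x = i * p + j * q"
      by (metis le_add_diff_inverse mult.commute)
    then show ?thesis
      by blast
  next
    case False
    then obtain k where k: "i * p - x = q * k"
      using ip by (metis cong_altdef_nat dvdE less_or_eq_imp_le nat_le_linear)
    with False obtain k' where "k = Suc k'"
      by (cases k) auto
    then have "q * k = q * k' + q"
      by simp
    with k False have "i * p = x + q * k' + q"
      by linarith
    moreover obtain t where "q = Suc i + t"
      using \<open>i < q\<close> less_iff_Suc_add by auto
    ultimately have "x + t * p + k' * q + p + q = p * q"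
      by (simp add: algebra_simps)
    then show ?thesis
      by blast
  qed
qed

lemma sylvester_frobenius_not_representable:
  fixes p q i j :: nat
  assumes "coprime p q" and "q > 0"
  shows "i * p + j * q + p + q \<noteq> p * q"
proof
  assume "i * p + j * q + p + q = p * q"
  then have sum: "(i + 1) * p + (j + 1) * q = q * p"
    by (simp add: algebra_simps)
  then have "q dvd (i + 1) * p"
    by (metis dvd_add_times_triv_right_iff dvd_triv_left)
  then have "q dvd i + 1"
    using assms(1) by (metis coprime_commute coprime_dvd_mult_left_iff)
  then have "q \<le> i + 1"
    by (simp add: dvd_imp_le)
  then have "q * p \<le> (i + 1) * p"
    by (rule mult_le_mono1)
  moreover have "(j + 1) * q > 0"
    using \<open>q > 0\<close> by simp
  ultimately show False
    using sum by linarith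
qed

context
  fixes S :: "nat set"
  assumes ns: "numerical_semigroup S"
begin

lemma numerical_semigroup_add_mem: "x \<in> S \<Longrightarrow> y \<in> S \<Longrightarrow> x + y \<in> S"
  using ns by (simp add: numerical_semigroup_def)

lemma numerical_semigroup_mult_mem: "p \<in> S \<Longrightarrow> k * p \<in> S"
  using ns by (induction k) (auto simp: numerical_semigroup_def)

lemma numerical_semigroup_lincomb_mem: "p \<in> S \<Longrightarrow> q \<in> S \<Longrightarrow> i * p + j * q \<in> S"
  by (simp add: numerical_semigroup_add_mem numerical_semigroup_mult_mem)

lemma finite_gaps: "finite (gaps S)"
  using ns by (simp add: numerical_semigroup_def gaps_def)

lemma frobenius_notin: "gaps S \<noteq> {} \<Longrightarrow> frobenius S \<notin> S"
  using Max_in[OF finite_gaps] by (simp add: frobenius_def gaps_def)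

lemma mem_if_frobenius_less: "frobenius S < x \<Longrightarrow> x \<in> S"
  using Max_ge[OF finite_gaps, of x] by (auto simp: frobenius_def gaps_def)

lemma le_frobenius_if_notin: "x \<notin> S \<Longrightarrow> x \<le> frobenius S"
  using mem_if_frobenius_less not_le by blast

lemma minimal_generators_subset: "minimal_generators S \<subseteq> S - {0}"
  by (auto simp: minimal_generators_def)

lemma add_notin_minimal_generators:
  "a \<in> S \<Longrightarrow> b \<in> S \<Longrightarrow> a \<noteq> 0 \<Longrightarrow> b \<noteq> 0 \<Longrightarrow> a + b \<notin> minimal_generators S"
  by (auto simp: minimal_generators_def)

lemma decompose_if_notin_minimal_generators:
  "x \<in> S \<Longrightarrow> x \<noteq> 0 \<Longrightarrow> x \<notin> minimal_generators S \<Longrightarrow>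
    \<exists>a b. a \<in> S \<and> b \<in> S \<and> a \<noteq> 0 \<and> b \<noteq> 0 \<and> x = a + b"
  by (auto simp: minimal_generators_def)

lemma finite_minimal_generators: "finite (minimal_generators S)"
proof (rule finite_subset)
  show "minimal_generators S \<subseteq> {..2 * frobenius S + 1}"
  proof
    fix x
    assume x: "x \<in> minimal_generators S"
    show "x \<in> {..2 * frobenius S + 1}"
    proof (rule ccontr)
      assume "x \<notin> {..2 * frobenius S + 1}"
      then have "frobenius S + 1 \<in> S" "x - (frobenius S + 1) \<in> S" "x - (frobenius S + 1) \<noteq> 0"
        and "x = (frobenius S + 1) + (x - (frobenius S + 1))"
        by (simp_all add: mem_if_frobenius_less)
      with x show False
        using add_notin_minimal_generators by (metis add_is_0 one_neq_zero)
    qed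
  qed
qed simp

lemma mem_two_generated:
  assumes "minimal_generators S \<subseteq> {p, q}" and "x \<in> S"
  shows "\<exists>i j. x = i * p + j * q"
  using assms(2)
proof (induction x rule: less_induct)
  case (less x)
  consider "x = 0" | "x = p" | "x = q" | "x \<notin> minimal_generators S \<and> x \<noteq> 0"
    using assms(1) by blast
  then show ?case
  proof cases
    case 1
    then have "x = 0 * p + 0 * q"
      by simp
    then show ?thesis
      by blast
  next
    case 2
    then have "x = 1 * p + 0 * q"
      by simp
    then show ?thesis
      by blast
  next
    case 3
    then have "x = 0 * p + 1 * q"
      by simp
    then show ?thesis
      by blast
  next
    case 4
    then obtain a b where ab: "a \<in> S" "b \<in> S" "a \<noteq> 0" "b \<noteq> 0" "x = a + b"
      using less.prems decompose_if_notin_minimal_generators by blast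
    then have "a < x" "b < x"
      by simp_all
    obtain i j where "a = i * p + j * q"
      using less.IH[OF \<open>a < x\<close> ab(1)] by blast
    moreover obtain i' j' where "b = i' * p + j' * q"
      using less.IH[OF \<open>b < x\<close> ab(2)] by blast
    ultimately have "x = (i + i') * p + (j + j') * q"
      using ab(5) by (simp add: algebra_simps)
    then show ?thesis
      by blast
  qed
qed

lemma two_generators_coprime:
  assumes "minimal_generators S \<subseteq> {p, q}"
  shows "coprime p q"
proof -
  have "gcd p q dvd x" if "x \<in> S" for x
    using mem_two_generated[OF assms that] by auto
  then have "gcd p q dvd frobenius S + 1" "gcd p q dvd (frobenius S + 1) + 1"
    by (simp_all add: mem_if_frobenius_less)
  then have "gcd p q dvd 1"
    by (simp only: dvd_add_right_iff)
  then show ?thesis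
    by (simp add: coprime_iff_gcd_eq_1)
qed

lemma embedding_dimension_ge_two:
  assumes "gaps S \<noteq> {}"
  shows "2 \<le> embedding_dimension S"
proof (rule ccontr)
  assume "\<not> 2 \<le> embedding_dimension S"
  then have "card (minimal_generators S) \<le> 1"
    by (simp add: embedding_dimension_def)
  then have "\<forall>a \<in> minimal_generators S. \<forall>b \<in> minimal_generators S. a = b"
    using card_le_Suc0_iff_eq[OF finite_minimal_generators] by simp
  then obtain p where p: "minimal_generators S \<subseteq> {p, p}"
    by (cases "minimal_generators S = {}") blast+
  then have "p = 1"
    using two_generators_coprime[OF p] by simp
  have "minimal_generators S \<noteq> {}"
    using two_generators_coprime[of 0 0] by auto
  with p \<open>p = 1\<close> have "x \<in> S" for x
    using minimal_generators_subset numerical_semigroup_mult_mem[of 1 x] by auto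
  with assms show False
    by (auto simp: gaps_def)
qed

lemma frobenius_two_generated:
  assumes gens: "minimal_generators S = {p, q}" and "gaps S \<noteq> {}"
  shows "frobenius S + p + q = p * q"
proof -
  have cop: "coprime p q"
    using two_generators_coprime[of p q] gens by simp
  have "p \<in> S" "q \<in> S" "q > 0"
    using minimal_generators_subset gens by auto
  have "\<not> (\<exists>i j. frobenius S = i * p + j * q)"
    using numerical_semigroup_lincomb_mem[OF \<open>p \<in> S\<close> \<open>q \<in> S\<close>] frobenius_notin[OF assms(2)]
    by auto
  then obtain i j where ij: "frobenius S + i * p + j * q + p + q = p * q"
    using sylvester_representable_or_dual[OF cop \<open>q > 0\<close>, of "frobenius S"] by blast
  have "i * p + j * q = 0"
  proof (rule ccontr)
    assume "i * p + j * q \<noteq> 0"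
    then have "frobenius S + (i * p + j * q) \<in> S"
      by (simp add: mem_if_frobenius_less)
    then obtain i' j' where "frobenius S + (i * p + j * q) = i' * p + j' * q"
      using mem_two_generated[OF equalityD1[OF gens]] by blast
    with ij sylvester_frobenius_not_representable[OF cop \<open>q > 0\<close>, of i' j'] show False
      by simp
  qed
  with ij show ?thesis
    by auto
qed

lemma embedding_dimension_two_symmetric:
  assumes "embedding_dimension S = 2" and "x \<notin> S"
  shows "frobenius S - x \<in> S"
proof -
  obtain p q where gens: "minimal_generators S = {p, q}"
    using assms(1) by (auto simp: embedding_dimension_def card_2_iff)
  have cop: "coprime p q"
    using two_generators_coprime[of p q] gens by simp
  have "p \<in> S" "q \<in> S" "q > 0"
    using minimal_generators_subset gens by auto
  have "gaps S \<noteq> {}"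
    using assms(2) by (auto simp: gaps_def)
  have "\<not> (\<exists>i j. x = i * p + j * q)"
    using numerical_semigroup_lincomb_mem[OF \<open>p \<in> S\<close> \<open>q \<in> S\<close>] assms(2) by auto
  then obtain i j where "x + i * p + j * q + p + q = p * q"
    using sylvester_representable_or_dual[OF cop \<open>q > 0\<close>, of x] by blast
  with frobenius_two_generated[OF gens \<open>gaps S \<noteq> {}\<close>] have "frobenius S - x = i * p + j * q"
    by simp
  then show ?thesis
    using numerical_semigroup_lincomb_mem[OF \<open>p \<in> S\<close> \<open>q \<in> S\<close>] by simp
qed

lemma frobenius_less_embedding_dimension:
  assumes "\<forall>a \<in> S. a \<noteq> 0 \<longrightarrow> frobenius S < a"
  shows "frobenius S < embedding_dimension S"
proof -
  have "{frobenius S + 1..2 * frobenius S + 1} \<subseteq> minimal_generators S"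
  proof
    fix x
    assume x: "x \<in> {frobenius S + 1..2 * frobenius S + 1}"
    then have "x \<in> S"
      by (simp add: mem_if_frobenius_less)
    moreover have "x \<noteq> a + b" if "a \<in> S" "b \<in> S" "a \<noteq> 0" "b \<noteq> 0" for a b
    proof -
      have "frobenius S < a" "frobenius S < b"
        using assms that by simp_all
      with x show ?thesis
        by simp
    qed
    moreover have "x \<noteq> 0"
      using x by simp
    ultimately show "x \<in> minimal_generators S"
      unfolding minimal_generators_def by blast
  qed
  then have "card {frobenius S + 1..2 * frobenius S + 1} \<le> embedding_dimension S"
    unfolding embedding_dimension_def by (rule card_mono[OF finite_minimal_generators])
  then show ?thesis
    by simp
qed

end

context
  fixes S :: "nat set"
  assumes ns: "numerical_semigroup S"
    and refl: "reflective S"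
begin

lemma reflective_genus_pos: "1 \<le> genus S"
  using refl by (simp add: reflective_def)

lemma reflective_mem_iff: "z < genus S \<Longrightarrow> z \<in> S \<longleftrightarrow> z + genus S \<notin> S"
  using refl by (auto simp: reflective_def)

lemma reflective_gaps_eq:
  "gaps S = (\<lambda>z. if z \<in> S then z + genus S else z) ` {..<genus S}" (is "_ = ?f ` _")
proof (rule sym, rule card_subset_eq[OF finite_gaps[OF ns]])
  show "?f ` {..<genus S} \<subseteq> gaps S"
    using reflective_mem_iff by (auto simp: gaps_def)
  have "inj_on ?f {..<genus S}"
    by (rule inj_onI) (auto split: if_splits)
  then show "card (?f ` {..<genus S}) = card (gaps S)"
    by (subst card_image) (simp_all add: genus_def)
qed

lemma reflective_gap_less:
  assumes "x \<notin> S"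
  shows "x < 2 * genus S"
proof -
  have "x \<in> gaps S"
    using assms by (simp add: gaps_def)
  then obtain z where "z < genus S" "x = (if z \<in> S then z + genus S else z)"
    unfolding reflective_gaps_eq by auto
  then show ?thesis
    by (simp split: if_splits)
qed

lemma reflective_genus_notin: "genus S \<notin> S"
  using reflective_mem_iff[of 0] reflective_genus_pos ns
  by (simp add: numerical_semigroup_def)

lemma reflective_genus_le_frobenius: "genus S \<le> frobenius S"
  using le_frobenius_if_notin[OF ns reflective_genus_notin] .

lemma reflective_frobenius_less: "frobenius S < 2 * genus S"
  using reflective_gap_less frobenius_notin[OF ns] reflective_genus_notin
  by (auto simp: gaps_def)

lemma reflective_frobenius_minus_genus_mem: "frobenius S - genus S \<in> S"
  using reflective_mem_iff[of "frobenius S - genus S"] reflective_frobenius_less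
    reflective_genus_le_frobenius frobenius_notin[OF ns] reflective_genus_notin
  by (auto simp: gaps_def)

lemma reflective_notin_between:
  assumes "frobenius S - genus S < y" and "y < genus S"
  shows "y \<notin> S"
proof
  assume "y \<in> S"
  then have "y + genus S \<notin> S"
    using reflective_mem_iff assms(2) by blast
  then show False
    using le_frobenius_if_notin[OF ns] assms(1) by fastforce
qed

lemma reflective_frobenius_less_embedding_dimension:
  assumes "frobenius S = genus S"
  shows "frobenius S < embedding_dimension S"
proof -
  have "frobenius S < a" if "a \<in> S" "a \<noteq> 0" for a
  proof (rule ccontr)
    assume "\<not> frobenius S < a"
    with assms reflective_genus_notin that(1) have "a < genus S"
      by (cases "a = genus S") auto
    with reflective_notin_between[of a] assms that show False
      by simp
  qed
  then show ?thesis
    using frobenius_less_embedding_dimension[OF ns] by blast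
qed

lemma reflective_genus_le_double:
  assumes "frobenius S \<noteq> genus S"
  shows "genus S \<le> 2 * (frobenius S - genus S)"
proof (rule ccontr)
  define M where "M = frobenius S - genus S"
  assume "\<not> genus S \<le> 2 * (frobenius S - genus S)"
  then have "M + M < genus S"
    by (simp add: M_def)
  moreover have "M \<noteq> 0"
    using assms reflective_genus_le_frobenius by (simp add: M_def)
  moreover have "M + M \<in> S"
    using numerical_semigroup_add_mem[OF ns] reflective_frobenius_minus_genus_mem by (simp add: M_def)
  ultimately show False
    using reflective_notin_between[of "M + M", folded M_def] by simp
qed

lemma reflective_embedding_dimension_two:
  assumes "embedding_dimension S = 2"
  shows "frobenius S + 1 = 2 * genus S"
proof (rule ccontr)
  assume "frobenius S + 1 \<noteq> 2 * genus S"
  with reflective_frobenius_less have less: "frobenius S + 1 < 2 * genus S"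
    by simp
  then have "frobenius S - genus S < genus S - 1"
    using reflective_genus_le_frobenius by arith
  with reflective_notin_between reflective_genus_pos have "genus S - 1 \<notin> S"
    by simp
  with embedding_dimension_two_symmetric[OF ns assms] have "frobenius S - (genus S - 1) \<in> S"
    by blast
  moreover have "frobenius S - (genus S - 1) = (frobenius S - genus S) + 1"
    using reflective_genus_le_frobenius reflective_genus_pos by simp
  moreover have "frobenius S - genus S + 1 < genus S"
    using less reflective_genus_le_frobenius by arith
  ultimately show False
    using reflective_notin_between[of "frobenius S - genus S + 1"] by simp
qed

lemma reflective_frobenius_bound:
  "frobenius S + 1 \<le> embedding_dimension S * (frobenius S + 1 - genus S)"
proof (cases "frobenius S = genus S")
  case True
  then show ?thesis
    using reflective_frobenius_less_embedding_dimension by simp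
next
  case False
  have "gaps S \<noteq> {}"
    using reflective_genus_notin by (auto simp: gaps_def)
  then have "2 \<le> embedding_dimension S"
    by (rule embedding_dimension_ge_two[OF ns])
  then consider "embedding_dimension S = 2" | "3 \<le> embedding_dimension S"
    by linarith
  then show ?thesis
  proof cases
    case 1
    then show ?thesis
      using reflective_embedding_dimension_two by simp
  next
    case 2
    then have "3 * (frobenius S + 1 - genus S)
        \<le> embedding_dimension S * (frobenius S + 1 - genus S)"
      by (rule mult_le_mono1)
    moreover have "frobenius S + 1 \<le> 3 * (frobenius S + 1 - genus S)"
      using reflective_genus_le_double[OF False] reflective_genus_le_frobenius by linarith
    ultimately show ?thesis
      by (rule le_trans[rotated])
  qed
qed

end

theorem mainTheorem14:
  fixes S :: "nat set"
  assumes "numerical_semigroup S"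
    and "reflective S"
    and "genus S \<ge> 1"
  shows "real (embedding_dimension S) \<ge>
           (real (frobenius S) + 1) / (real (frobenius S) + 1 - real (genus S))"
proof -
  have le: "genus S \<le> frobenius S"
    using reflective_genus_le_frobenius[OF assms(1,2)] .
  have "real (frobenius S + 1)
      \<le> real (embedding_dimension S) * real (frobenius S + 1 - genus S)"
    using reflective_frobenius_bound[OF assms(1,2)] by (metis of_nat_le_iff of_nat_mult)
  moreover have "real (frobenius S + 1 - genus S) > 0"
    using le by simp
  ultimately have "real (frobenius S + 1) / real (frobenius S + 1 - genus S)
      \<le> real (embedding_dimension S)"
    by (simp only: pos_divide_le_eq)
  moreover have "real (frobenius S + 1 - genus S) = real (frobenius S) + 1 - real (genus S)"
    using le by (simp add: of_nat_diff)
  ultimately show ?thesis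
    by (simp only: of_nat_add of_nat_1)
qed

end
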